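(* Let $m > 1$ be an integer, and let $\lambda = (\lambda_1, \ldots, \lambda_m)$ be a sequence of integers with $\lambda_1 \geq \cdots \geq \lambda_m > 0$ and $\lambda_1 > 1$. Define the sequence $\mu = (\mu_1, \ldots, \mu_{2m - 1})$ by \[\mu_{k} = \max_{\substack{1 \le i, j \le m\\ i + j - 1 = k}} (\lambda_i + \lambda_j - 1)\] for $1 \leq k \leq 2m-1$. Then \[\sum_{k=1}^{2m-1} \mu_k \geq 3\left(\sum_{k=1}^m \lambda_k\right) - 3.\] *)

theory Defs
  imports Main
begin

definition mu_seq :: "nat \<Rightarrow> (nat \<Rightarrow> int) \<Rightarrow> nat \<Rightarrow> int" where
  "mu_seq m lam k =
     Max {lam i + lam j - 1 | i j. 1 \<le> i \<and> i \<le> m \<and> 1 \<le> j \<and> j \<le> m \<and> i + j - 1 = k}"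

end

theory Submission
  imports Defs
begin

text \<open>Let \<open>p\<close> be the last index with \<open>lam p \<ge> 2\<close>, so \<open>lam i = 1\<close> for \<open>i > p\<close>, and
  let \<open>S = lam 1 + \<dots> + lam p\<close>. The bounds \<open>\<mu>(2i-1) \<ge> 2 lam i - 1\<close> and
  \<open>\<mu>(2i) \<ge> lam i + lam (i+1) - 1\<close> give \<open>4 S - lam 1 - lam p - 2p + 1\<close> for the first
  \<open>2p - 1\<close> terms. Of the remaining \<open>2(m - p)\<close> terms, the first half are at least
  \<open>lam p\<close> (pair \<open>p\<close> with a later index) and the second half at least \<open>1\<close>. What is left,
  \<open>S - lam 1 - lam p - 2p + 4 + (m - p)(lam p - 2) \<ge> 0\<close>, holds because the inner terms of
  \<open>S\<close> are at least \<open>2\<close>, resp. because \<open>m \<ge> 2\<close> when \<open>p = 1\<close>.\<close>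

lemma sum_atLeastAtMost_split:
  fixes a b c :: nat and f :: "nat \<Rightarrow> 'a::comm_monoid_add"
  assumes "a \<le> b" "b \<le> c + 1"
  shows "sum f {a..c} = sum f {a..<b} + sum f {b..c}"
proof -
  have "{a..c} = {a..<b} \<union> {b..c}"
    using assms by auto
  then show ?thesis
    by (simp add: sum.union_disjoint ivl_disj_int)
qed

lemma mu_seq_ge:
  assumes "1 \<le> i" "i \<le> m" "1 \<le> j" "j \<le> m"
  shows "lam i + lam j - 1 \<le> mu_seq m lam (i + j - 1)"
proof -
  let ?A = "{lam a + lam b - 1 | a b. 1 \<le> a \<and> a \<le> m \<and> 1 \<le> b \<and> b \<le> m \<and> a + b - 1 = i + j - 1}"
  have "?A \<subseteq> (\<lambda>(a, b). lam a + lam b - 1) ` ({1..m} \<times> {1..m})"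
    by force
  then have "finite ?A"
    by (rule finite_subset) auto
  moreover have "lam i + lam j - 1 \<in> ?A"
    using assms by blast
  ultimately show ?thesis
    unfolding mu_seq_def by (rule Max_ge)
qed

lemma mu_seq_ge_left:
  assumes "1 \<le> i" "i \<le> m" "1 \<le> j" "j \<le> m" "1 \<le> lam j" "k = i + j - 1"
  shows "lam i \<le> mu_seq m lam k"
  using mu_seq_ge[OF assms(1-4), of lam] assms(5,6) by simp

lemma sum_mu_seq_prefix_ge:
  assumes "1 \<le> q" "q \<le> m"
  shows "4 * (\<Sum>i=1..q. lam i) - lam 1 - lam q - 2 * int q + 1
           \<le> (\<Sum>k=1..<2*q. mu_seq m lam k)"
  using assms
proof (induction q rule: nat_induct_at_least)
  case base
  then show ?case
    using mu_seq_ge[of 1 m 1 lam] by (simp add: numeral_2_eq_2)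
next
  case (Suc q)
  have "lam q + lam (Suc q) - 1 \<le> mu_seq m lam (2 * q)"
    using Suc mu_seq_ge[of q m "Suc q" lam] by (simp add: numeral_2_eq_2)
  moreover have "lam (Suc q) + lam (Suc q) - 1 \<le> mu_seq m lam (Suc (2 * q))"
    using Suc mu_seq_ge[of "Suc q" m "Suc q" lam] by (simp add: numeral_2_eq_2)
  ultimately show ?case
    using Suc by simp
qed

lemma sum_mu_seq_middle_ge:
  assumes "1 \<le> p" "p \<le> m" "\<And>i. 1 \<le> i \<Longrightarrow> i \<le> m \<Longrightarrow> 1 \<le> lam i"
  shows "int (m - p) * lam p \<le> (\<Sum>k=2*p..<m+p. mu_seq m lam k)"
proof -
  have "lam p \<le> mu_seq m lam k" if "k \<in> {2*p..<m+p}" for k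
    using that assms by (intro mu_seq_ge_left[of p m "k + 1 - p"]) auto
  then show ?thesis
    using sum_bounded_below[of "{2*p..<m+p}" "lam p" "mu_seq m lam"] assms(1,2) by simp
qed

lemma sum_mu_seq_tail_ge:
  assumes "1 \<le> p" "p \<le> m" "\<And>i. 1 \<le> i \<Longrightarrow> i \<le> m \<Longrightarrow> 1 \<le> lam i"
  shows "int (m - p) \<le> (\<Sum>k=m+p..2*m-1. mu_seq m lam k)"
proof -
  have "1 \<le> mu_seq m lam k" if "k \<in> {m+p..2*m-1}" for k
  proof -
    have "lam (k + 1 - m) \<le> mu_seq m lam k"
      using that assms by (intro mu_seq_ge_left[of "k + 1 - m" m m]) auto
    moreover have "1 \<le> lam (k + 1 - m)"
      using that assms by auto
    ultimately show ?thesis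
      by simp
  qed
  then show ?thesis
    using sum_bounded_below[of "{m+p..2*m-1}" 1 "mu_seq m lam"] assms(1,2) by simp
qed

lemma sum_mu_seq_ge:
  assumes "1 \<le> p" "p \<le> m" "\<And>i. 1 \<le> i \<Longrightarrow> i \<le> m \<Longrightarrow> 1 \<le> lam i"
  shows "4 * (\<Sum>i=1..p. lam i) - lam 1 - lam p - 2 * int p + 1 + int (m - p) * lam p + int (m - p)
           \<le> (\<Sum>k=1..2*m-1. mu_seq m lam k)"
proof -
  have "(\<Sum>k=1..2*m-1. mu_seq m lam k) = (\<Sum>k=1..<2*p. mu_seq m lam k)
      + (\<Sum>k=2*p..<m+p. mu_seq m lam k) + (\<Sum>k=m+p..2*m-1. mu_seq m lam k)"
    using sum_atLeastAtMost_split[of 1 "2*p" "2*m-1" "mu_seq m lam"]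
      sum_atLeastAtMost_split[of "2*p" "m+p" "2*m-1" "mu_seq m lam"] assms(1,2) by simp
  then show ?thesis
    using sum_mu_seq_prefix_ge[OF assms(1,2), of lam] sum_mu_seq_middle_ge[of p m lam, OF assms]
      sum_mu_seq_tail_ge[of p m lam, OF assms] by linarith
qed

lemma sum_ge_ends:
  fixes lam :: "nat \<Rightarrow> int"
  assumes "2 \<le> q" "\<And>i. 2 \<le> i \<Longrightarrow> i < q \<Longrightarrow> 2 \<le> lam i"
  shows "lam 1 + lam q + 2 * (int q - 2) \<le> (\<Sum>i=1..q. lam i)"
proof -
  have "(\<Sum>i=1..q. lam i) = lam 1 + (\<Sum>i=2..<q. lam i) + lam q"
    using sum_atLeastAtMost_split[of 1 2 q lam] sum.last_plus[of 2 q lam] assms(1)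
    by (simp add: numeral_2_eq_2)
  moreover have "of_nat (card {2..<q}) * 2 \<le> (\<Sum>i=2..<q. lam i)"
    using assms by (intro sum_bounded_below) auto
  ultimately show ?thesis
    using assms(1) by simp
qed

lemma antitone_threshold:
  fixes lam :: "nat \<Rightarrow> int"
  assumes "1 \<le> m" "2 \<le> lam 1"
    and "\<And>i j. 1 \<le> i \<Longrightarrow> i \<le> j \<Longrightarrow> j \<le> m \<Longrightarrow> lam j \<le> lam i"
    and "\<And>i. 1 \<le> i \<Longrightarrow> i \<le> m \<Longrightarrow> 1 \<le> lam i"
  obtains p where "1 \<le> p" "p \<le> m" "\<And>i. 1 \<le> i \<Longrightarrow> i \<le> p \<Longrightarrow> 2 \<le> lam i"
    "\<And>i. p < i \<Longrightarrow> i \<le> m \<Longrightarrow> lam i = 1"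
proof
  let ?P = "{i \<in> {1..m}. 2 \<le> lam i}"
  have fin: "finite ?P"
    by simp
  have p: "Max ?P \<in> ?P"
    using fin assms(1,2) by (intro Max_in) auto
  have p_max: "\<And>i. i \<in> ?P \<Longrightarrow> i \<le> Max ?P"
    using fin by simp
  show "1 \<le> Max ?P" "Max ?P \<le> m"
    using p by auto
  show "2 \<le> lam i" if "1 \<le> i" "i \<le> Max ?P" for i
    using p assms(3)[OF that] by fastforce
  show "lam i = 1" if "Max ?P < i" "i \<le> m" for i
    using p_max[of i] assms(4)[of i] that p by fastforce
qed

theorem lemmaA1:
  fixes m :: nat and lam :: "nat \<Rightarrow> int"
  assumes "m > 1"
    and "\<And>i j. 1 \<le> i \<Longrightarrow> i \<le> j \<Longrightarrow> j \<le> m \<Longrightarrow> lam i \<ge> lam j"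
    and "lam m > 0"
    and "lam 1 > 1"
  shows "(\<Sum>k=1..2*m-1. mu_seq m lam k) \<ge> 3 * (\<Sum>k=1..m. lam k) - 3"
proof -
  have pos: "1 \<le> lam i" if "1 \<le> i" "i \<le> m" for i
    using assms(2)[OF that order_refl] assms(3) by linarith
  obtain p where p: "1 \<le> p" "p \<le> m" and big: "\<And>i. 1 \<le> i \<Longrightarrow> i \<le> p \<Longrightarrow> 2 \<le> lam i"
    and ones: "\<And>i. p < i \<Longrightarrow> i \<le> m \<Longrightarrow> lam i = 1"
    using antitone_threshold[of m lam] assms pos by auto
  define S where "S = (\<Sum>i=1..p. lam i)"
  have "(\<Sum>k=1..m. lam k) = S + (\<Sum>k=Suc p..m. 1)"
    using sum_atLeastAtMost_split[of 1 "Suc p" m lam, unfolded atLeastLessThanSuc_atLeastAtMost]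
      p ones unfolding S_def by simp
  then have total: "(\<Sum>k=1..m. lam k) = S + int (m - p)"
    by simp
  have "0 \<le> S - lam 1 - lam p - 2 * int p + 4 + int (m - p) * (lam p - 2)"
  proof (cases "p = 1")
    case True
    have "1 * (lam 1 - 2) \<le> int (m - 1) * (lam 1 - 2)"
      using assms(1,4) by (intro mult_right_mono) auto
    then show ?thesis
      using True unfolding S_def by simp
  next
    case False
    then show ?thesis
      using sum_ge_ends[of p lam] big p unfolding S_def by simp
  qed
  then show ?thesis
    using sum_mu_seq_ge[OF p, of lam] pos total unfolding S_def[symmetric]
    by (simp add: algebra_simps)
qed

end
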